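(* Let $n \geqslant 12$ be even and let $\lambda$ be a natural number with $2 \leqslant \lambda \leqslant \frac{n-4}{4}$. Then the partition $\left(\frac{n-2\lambda}{2},\ \lambda+2,\ 3,\ 2\times(\lambda-2),\ 1\times\frac{n-4\lambda-2}{2}\right)$ of $n$ corresponds to the eigenvalue $\lambda$.
   Context: In a partition, the notation $a\times t$ means that the part $a$ is repeated $t$ times (possibly $t=0$). An integer partition $(n_1,\dots,n_k)$ of $n$ (with $n_1\geqslant \dots\geqslant n_k\geqslant 1$, $\sum_j n_j=n$) is said to correspond to the eigenvalue $\lambda$ if $\lambda=\sum_{j=1}^k \frac{n_j(n_j-2j+1)}{2}$; this is the eigenvalue of the Transposition graph $T_n=\mathrm{Cay}(\mathrm{Sym}_n,T)$ ($T$ the set of all transpositions) associated with the irreducible character of $\mathrm{Sym}_n$ indexed by the partition. *)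

theory Defs
  imports Complex_Main
begin

definition is_partition :: "nat \<Rightarrow> nat list \<Rightarrow> bool" where
  "is_partition n p \<longleftrightarrow> sorted_wrt (\<ge>) p \<and> (\<forall>x\<in>set p. x \<ge> 1) \<and> sum_list p = n"

text \<open>The eigenvalue sum_{j=1}^k n_j (n_j - 2j + 1)/2 (list index i = j - 1).
  Each summand n_j(n_j - 2j + 1) is even, so division by 2 is exact.\<close>
definition partition_eigenvalue :: "nat list \<Rightarrow> int" where
  "partition_eigenvalue p =
     (\<Sum>i<length p. (int (p ! i) * (int (p ! i) - 2 * int (i + 1) + 1)) div 2)"

definition corresponds_to_eigenvalue :: "nat \<Rightarrow> nat list \<Rightarrow> int \<Rightarrow> bool" where
  "corresponds_to_eigenvalue n p \<mu> \<longleftrightarrow> is_partition n p \<and> partition_eigenvalue p = \<mu>"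

end

theory Submission
  imports Defs
begin

text \<open>A row of length a in position j contributes a (a - 2j + 1)/2, and for a block of k equal
  rows a starting after position s these contributions sum to k a (a - 2s - k)/2. The partition
  consists of three single rows followed by a block of 2s and a block of 1s, so twice its
  eigenvalue is an explicit polynomial in \<open>\<lambda>\<close> and the number of 1s, which collapses to 2\<open>\<lambda>\<close>.\<close>

definition eigenvalue_from :: "nat \<Rightarrow> nat list \<Rightarrow> int" where
  "eigenvalue_from s p =
     (\<Sum>i<length p. (int (p ! i) * (int (p ! i) - 2 * int (s + i + 1) + 1)) div 2)"

lemma partition_eigenvalue_eq_eigenvalue_from: "partition_eigenvalue p = eigenvalue_from 0 p"
  unfolding partition_eigenvalue_def eigenvalue_from_def by simp

lemma eigenvalue_from_Nil [simp]: "eigenvalue_from s [] = 0"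
  by (simp add: eigenvalue_from_def)

lemma even_row_contribution: "even (int a * (int a - 2 * int j + 1))"
  by (cases "even a") auto

lemma eigenvalue_from_Cons:
  "2 * eigenvalue_from s (x # xs) = int x * (int x - 2 * int s - 1) + 2 * eigenvalue_from (Suc s) xs"
proof -
  have "eigenvalue_from s (x # xs)
      = (int x * (int x - 2 * int (s + 1) + 1)) div 2 + eigenvalue_from (Suc s) xs"
    unfolding eigenvalue_from_def length_Cons sum.lessThan_Suc_shift by (simp add: algebra_simps)
  moreover have "2 * ((int x * (int x - 2 * int (s + 1) + 1)) div 2) = int x * (int x - 2 * int s - 1)"
    using even_row_contribution[of x "s + 1"] by (simp add: algebra_simps)
  ultimately show ?thesis by (simp add: algebra_simps)
qed

lemma eigenvalue_from_append:
  "eigenvalue_from s (xs @ ys) = eigenvalue_from s xs + eigenvalue_from (s + length xs) ys"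
proof (induction xs arbitrary: s)
  case Nil
  then show ?case by simp
next
  case (Cons x xs)
  have "2 * eigenvalue_from s ((x # xs) @ ys)
      = 2 * eigenvalue_from s (x # xs) + 2 * eigenvalue_from (s + length (x # xs)) ys"
    using Cons.IH[of "Suc s"] by (simp add: eigenvalue_from_Cons algebra_simps)
  then show ?case by simp
qed

lemma eigenvalue_from_replicate:
  "2 * eigenvalue_from s (replicate k a) = int k * int a * (int a - 2 * int s - int k)"
proof (induction k arbitrary: s)
  case 0
  then show ?case by simp
next
  case (Suc k)
  show ?case
    using Suc.IH[of "Suc s"] by (simp add: eigenvalue_from_Cons algebra_simps)
qed

lemma eigenvalue_three_rows_then_twos_then_ones:
  "partition_eigenvalue ([l + 3 + k, l + 4, 3] @ replicate l 2 @ replicate k 1) = int l + 2"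
proof -
  have "2 * partition_eigenvalue ([l + 3 + k, l + 4, 3] @ replicate l 2 @ replicate k 1)
      = int (l + 3 + k) * (int (l + 3 + k) - 1) + int (l + 4) * (int (l + 4) - 3) - 6
        + 2 * eigenvalue_from 3 (replicate l 2) + 2 * eigenvalue_from (l + 3) (replicate k 1)"
    unfolding partition_eigenvalue_eq_eigenvalue_from
    by (simp add: eigenvalue_from_append eigenvalue_from_Cons numeral_3_eq_3 algebra_simps)
  also have "\<dots> = 2 * (int l + 2)"
    unfolding eigenvalue_from_replicate by (simp add: algebra_simps)
  finally show ?thesis by simp
qed

lemma sorted_wrt_replicate: "R a a \<Longrightarrow> sorted_wrt R (replicate k a)"
  by (induction k) auto

lemma is_partition_three_rows_then_twos_then_ones:
  "1 \<le> k \<Longrightarrow> is_partition (4 * l + 10 + 2 * k) ([l + 3 + k, l + 4, 3] @ replicate l 2 @ replicate k 1)"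
  unfolding is_partition_def
  by (auto simp: sorted_wrt_append sorted_wrt_replicate sum_list_replicate)

theorem lemma4:
  fixes n lam :: nat
  assumes "even n" and "n \<ge> 12"
    and "2 \<le> lam" and "real lam \<le> (real n - 4) / 4"
  shows "corresponds_to_eigenvalue n
           ([(n - 2 * lam) div 2, lam + 2, 3] @ replicate (lam - 2) 2
              @ replicate ((n - 4 * lam - 2) div 2) 1)
           (int lam)"
proof -
  obtain l where l: "lam = l + 2"
    using \<open>2 \<le> lam\<close> le_Suc_ex by (metis add.commute)
  have "real (4 * lam + 4) \<le> real n"
    using assms(4) by simp
  then have "4 * lam + 4 \<le> n"
    by linarith
  moreover obtain m where "n = 2 * m"
    using \<open>even n\<close> by blast
  ultimately obtain k where k: "n = 4 * l + 10 + 2 * k" and "1 \<le> k"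
    using l by (intro that[of "m - 2 * l - 5"]) auto
  have list_eq: "[(n - 2 * lam) div 2, lam + 2, 3] @ replicate (lam - 2) 2
          @ replicate ((n - 4 * lam - 2) div 2) 1
      = [l + 3 + k, l + 4, 3] @ replicate l 2 @ replicate k 1"
    using k l by simp
  show ?thesis
    unfolding corresponds_to_eigenvalue_def list_eq
    unfolding k l of_nat_add of_nat_numeral
    using is_partition_three_rows_then_twos_then_ones[OF \<open>1 \<le> k\<close>]
      eigenvalue_three_rows_then_twos_then_ones
    by (rule conjI)
qed

end
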